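(* Let $P,Q$ be probability measures, $X\sim P$, and suppose $\mathbb{P}[\imath_{P\|Q}(X)=x]=0$ for every $x\in\mathbb{R}$. Then: (a) $\omega\mapsto\mathcal{I}_\omega(P\|Q)$ is continuously differentiable on $(0,\frac12)\cup(\frac12,1)$, its derivative $\mathcal{I}'_\omega(P\|Q)$ is non-negative on $(0,\frac12)$ and non-positive on $(\frac12,1)$, and $\lim_{\omega\uparrow\frac12}\mathcal{I}'_\omega(P\|Q) - \lim_{\omega\downarrow\frac12}\mathcal{I}'_\omega(P\|Q) = 2$; (b) for $\omega\in(0,\frac12)$, $\mathbb{F}_{P\|Q}\bigl(\log\frac{1-\omega}{\omega}\bigr) = 1-\mathcal{I}_\omega(P\|Q)-(1-\omega)\mathcal{I}'_\omega(P\|Q)$; for $\omega\in(\frac12,1)$, $\mathbb{F}_{P\|Q}\bigl(\log\frac{1-\omega}{\omega}\bigr) = -\mathcal{I}_\omega(P\|Q)-(1-\omega)\mathcal{I}'_\omega(P\|Q)$; and $\mathbb{F}_{P\|Q}(0) = -\mathcal{I}_{1/2}(P\|Q)-\frac12\lim_{\omega\downarrow\frac12}\mathcal{I}'_\omega(P\|Q)$; (c) consequently, $\{\mathcal{I}_\omega(P\|Q):\omega\in(0,\frac12]\}$ determines $\mathbb{F}_{P\|Q}$ on $[0,\infty)$ and $\{\mathcal{I}_\omega(P\|Q):\omega\in(\frac12,1)\}$ determines $\mathbb{F}_{P\|Q}$ on $(-\infty,0)$.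
   Context: $\log$ is to a fixed base $b>1$. For densities $p,q$ of $P,Q$ w.r.t. a dominating measure $\mu$, $\imath_{P\|Q}:=\log p-\log q$ (in $[-\infty,\infty]$), $\mathbb{F}_{P\|Q}(x):=\mathbb{P}[\imath_{P\|Q}(X)\le x]$ with $X\sim P$. The DeGroot statistical information is $\mathcal{I}_\omega(P\|Q):=\int q\,\phi_\omega(p/q)\,\mathrm{d}\mu$ with $\phi_\omega(t)=\min\{\omega,1-\omega\}-\min\{\omega t,1-\omega\}$, $\omega\in(0,1)$, using the $f$-divergence conventions $\phi(0):=\lim_{t\downarrow0}\phi(t)$, $0\phi(0/0)=0$, $0\phi(a/0)=a\lim_{u\to\infty}\phi(u)/u$. *)

theory Defs
  imports "HOL-Probability.Probability"
begin

definition degroot_phi :: "real \<Rightarrow> real \<Rightarrow> real" where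
  "degroot_phi \<omega> t = min \<omega> (1 - \<omega>) - min (\<omega> * t) (1 - \<omega>)"

text \<open>Pointwise integrand c * phi(a/c) of an f-divergence, with the conventions
  phi(0) := lim_{t -> 0+} phi(t), 0 phi(0/0) = 0, 0 phi(a/0) = a lim_{u -> oo} phi(u)/u.\<close>
definition fdiv_integrand :: "(real \<Rightarrow> real) \<Rightarrow> real \<Rightarrow> real \<Rightarrow> real" where
  "fdiv_integrand \<phi> a c =
     (if c > 0 then (if a = 0 then c * Lim (at_right 0) \<phi> else c * \<phi> (a / c))
      else if a > 0 then a * Lim at_top (\<lambda>u. \<phi> u / u)
      else 0)"

definition f_divergence :: "(real \<Rightarrow> real) \<Rightarrow> 'a measure \<Rightarrow> ('a \<Rightarrow> real) \<Rightarrow> ('a \<Rightarrow> real) \<Rightarrow> real" where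
  "f_divergence \<phi> \<mu> p q = (\<integral>x. fdiv_integrand \<phi> (p x) (q x) \<partial>\<mu>)"

definition degroot_info :: "real \<Rightarrow> 'a measure \<Rightarrow> ('a \<Rightarrow> real) \<Rightarrow> ('a \<Rightarrow> real) \<Rightarrow> real" where
  "degroot_info \<omega> \<mu> p q = f_divergence (degroot_phi \<omega>) \<mu> p q"

definition log_ext :: "real \<Rightarrow> real \<Rightarrow> ereal" where
  "log_ext b t = (if t > 0 then ereal (log b t) else - \<infinity>)"

definition info_dens :: "real \<Rightarrow> ('a \<Rightarrow> real) \<Rightarrow> ('a \<Rightarrow> real) \<Rightarrow> 'a \<Rightarrow> ereal" where
  "info_dens b p q x = log_ext b (p x) - log_ext b (q x)"

definition info_cdf :: "real \<Rightarrow> 'a measure \<Rightarrow> ('a \<Rightarrow> real) \<Rightarrow> ('a \<Rightarrow> real) \<Rightarrow> real \<Rightarrow> real" where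
  "info_cdf b P p q x = measure P {y \<in> space P. info_dens b p q y \<le> ereal x}"

definition dens_pair :: "'a measure \<Rightarrow> 'a measure \<Rightarrow> 'a measure \<Rightarrow> ('a \<Rightarrow> real) \<Rightarrow> ('a \<Rightarrow> real) \<Rightarrow> bool" where
  "dens_pair \<mu> P Q p q \<longleftrightarrow>
     prob_space P \<and> prob_space Q \<and>
     p \<in> borel_measurable \<mu> \<and> q \<in> borel_measurable \<mu> \<and>
     (\<forall>x \<in> space \<mu>. 0 \<le> p x \<and> 0 \<le> q x) \<and>
     P = density \<mu> (\<lambda>x. ennreal (p x)) \<and> Q = density \<mu> (\<lambda>x. ennreal (q x))"

definition info_no_atoms :: "real \<Rightarrow> 'a measure \<Rightarrow> ('a \<Rightarrow> real) \<Rightarrow> ('a \<Rightarrow> real) \<Rightarrow> bool" where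
  "info_no_atoms b P p q \<longleftrightarrow> (\<forall>x::real. measure P {y \<in> space P. info_dens b p q y = ereal x} = 0)"

end

theory Submission
  imports Defs
begin

text \<open>
  For \<open>0 < \<omega> < 1\<close> one has \<open>I\<^sub>\<omega> = min \<omega> (1 - \<omega>) - G \<omega>\<close>, where
  \<open>G \<omega> = \<integral> min (\<omega> p) ((1 - \<omega>) q) d\<mu>\<close> is the Bayes risk of testing \<open>P\<close> against \<open>Q\<close>
  with prior \<open>\<omega>\<close>. The Bayes risk is concave, and with \<open>A\<^sub>\<omega> = {\<omega> p < (1 - \<omega>) q}\<close> the number
  \<open>\<rho> \<omega> = P A\<^sub>\<omega> - Q (- A\<^sub>\<omega>)\<close> is a supergradient at \<open>\<omega>\<close>. Ties \<open>\<omega> p = (1 - \<omega>) q\<close> with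
  \<open>p > 0\<close> are atoms of the information density at \<open>log ((1 - \<omega>) / \<omega>)\<close>, hence \<open>P\<close>-null;
  so \<open>\<rho>\<close> is continuous by dominated convergence and \<open>G' = \<rho>\<close>. For the same reason
  \<open>A\<^sub>\<omega>\<close> is, up to a \<open>P\<close>-null set, the event \<open>\<imath> < log ((1 - \<omega>) / \<omega>)\<close>, so
  \<open>F (log ((1 - \<omega>) / \<omega>)) = P A\<^sub>\<omega> = G \<omega> + (1 - \<omega>) \<rho> \<omega>\<close>, which is (b).
  As \<open>\<omega>\<close> ranges over either half of \<open>(0, 1)\<close>, \<open>log ((1 - \<omega>) / \<omega>)\<close> covers the
  corresponding half line, which gives (c).
\<close>

definition bayes_risk :: "'a measure \<Rightarrow> ('a \<Rightarrow> real) \<Rightarrow> ('a \<Rightarrow> real) \<Rightarrow> real \<Rightarrow> real" where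
  "bayes_risk \<mu> p q w = (\<integral>x. min (w * p x) ((1 - w) * q x) \<partial>\<mu>)"

definition bayes_risk_slope_at :: "('a \<Rightarrow> real) \<Rightarrow> ('a \<Rightarrow> real) \<Rightarrow> real \<Rightarrow> 'a \<Rightarrow> real" where
  "bayes_risk_slope_at p q w x = (if w * p x < (1 - w) * q x then p x else - q x)"

definition bayes_risk_slope :: "'a measure \<Rightarrow> ('a \<Rightarrow> real) \<Rightarrow> ('a \<Rightarrow> real) \<Rightarrow> real \<Rightarrow> real" where
  "bayes_risk_slope \<mu> p q w = (\<integral>x. bayes_risk_slope_at p q w x \<partial>\<mu>)"

lemma degroot_phi_at_right_0:
  assumes "0 < w" "w < 1"
  shows "Lim (at_right 0) (degroot_phi w) = min w (1 - w)"
proof -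
  have "continuous_on UNIV (degroot_phi w)"
    unfolding degroot_phi_def by (intro continuous_intros)
  then have "(degroot_phi w \<longlongrightarrow> degroot_phi w 0) (at_right 0)"
    by (meson UNIV_I continuous_on_def filterlim_at_split tendsto_at_iff_tendsto_nhds)
  then show ?thesis
    using assms by (intro tendsto_Lim) (auto simp: degroot_phi_def)
qed

lemma degroot_phi_slope_at_top:
  assumes "0 < w" "w < 1"
  shows "Lim at_top (\<lambda>u. degroot_phi w u / u) = 0"
proof -
  have "eventually (\<lambda>u. (min w (1 - w) - (1 - w)) / u = degroot_phi w u / u) at_top"
    using eventually_ge_at_top[of "(1 - w) / w"]
  proof eventually_elim
    case (elim u)
    then have "1 - w \<le> w * u" using assms by (simp add: field_simps)
    then show ?case by (simp add: degroot_phi_def)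
  qed
  with tendsto_divide_0[OF tendsto_const filterlim_at_top_imp_at_infinity[OF filterlim_ident]]
  have "((\<lambda>u. degroot_phi w u / u) \<longlongrightarrow> 0) at_top"
    by (rule Lim_transform_eventually)
  then show ?thesis by (intro tendsto_Lim) auto
qed

lemma fdiv_integrand_degroot_phi:
  assumes "0 < w" "w < 1" "0 \<le> a" "0 \<le> c"
  shows "fdiv_integrand (degroot_phi w) a c = c * min w (1 - w) - min (w * a) ((1 - w) * c)"
proof (cases "c > 0")
  case True
  have "c * min (w * (a / c)) (1 - w) = min (w * a) ((1 - w) * c)"
    using True by (cases "w * (a / c) \<le> 1 - w") (auto simp: min_def field_simps)
  then show ?thesis
    using True assms degroot_phi_at_right_0[OF assms(1,2)]
    by (auto simp: fdiv_integrand_def degroot_phi_def right_diff_distrib mult.commute)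
next
  case False
  then show ?thesis
    using assms degroot_phi_slope_at_top[OF assms(1,2)]
    by (auto simp: fdiv_integrand_def min_def mult_le_0_iff)
qed

text \<open>The slope is the derivative in \<open>w\<close> of the active branch of the minimum, so the
  minimum, being concave in \<open>w\<close>, lies below its tangent lines.\<close>

lemma min_le_tangent_bayes_risk_slope_at:
  "min (u * p x) ((1 - u) * q x)
     \<le> min (s * p x) ((1 - s) * q x) + (u - s) * bayes_risk_slope_at p q s x"
  by (auto simp: bayes_risk_slope_at_def min_def algebra_simps)

lemma min_add_bayes_risk_slope_at:
  "min (w * p x) ((1 - w) * q x) + (1 - w) * bayes_risk_slope_at p q w x
     = indicator {y. w * p y < (1 - w) * q y} x * p x"
  by (auto simp: bayes_risk_slope_at_def min_def algebra_simps)

lemma isCont_bayes_risk_slope_at: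
  assumes "s * p x \<noteq> (1 - s) * q x \<or> (p x = 0 \<and> q x = 0)"
  shows "isCont (\<lambda>w. bayes_risk_slope_at p q w x) s"
proof -
  have gap: "isCont (\<lambda>w. w * p x - (1 - w) * q x) s"
    by (intro continuous_intros)
  consider "s * p x - (1 - s) * q x < 0" | "s * p x - (1 - s) * q x > 0" | "p x = 0" "q x = 0"
    using assms by linarith
  then have "eventually (\<lambda>w. bayes_risk_slope_at p q w x = bayes_risk_slope_at p q s x) (at s)"
  proof cases
    case 1
    have "eventually (\<lambda>w. w * p x - (1 - w) * q x < 0) (at s)"
      by (rule order_tendstoD(2)[OF gap[unfolded isCont_def]]) (use 1 in simp)
    then show ?thesis
      by eventually_elim (use 1 in \<open>auto simp: bayes_risk_slope_at_def\<close>)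
  next
    case 2
    have "eventually (\<lambda>w. w * p x - (1 - w) * q x > 0) (at s)"
      by (rule order_tendstoD(1)[OF gap[unfolded isCont_def]]) (use 2 in simp)
    then show ?thesis
      by eventually_elim (use 2 in \<open>auto simp: bayes_risk_slope_at_def\<close>)
  qed (simp add: bayes_risk_slope_at_def)
  then show ?thesis
    by (simp add: isCont_def tendsto_eventually)
qed

text \<open>A function with a continuous family of supergradients is differentiable: the
  difference quotients at \<open>s\<close> are squeezed between \<open>g u\<close> and \<open>g s\<close>.\<close>

lemma has_field_derivative_supergradient:
  fixes f g :: "real \<Rightarrow> real"
  assumes super: "\<And>u s. f u - f s \<le> (u - s) * g s" and cont: "isCont g s"
  shows "(f has_field_derivative g s) (at s)"
  unfolding has_field_derivative_iff
proof (rule LIM_zero_cancel, rule Lim_null_comparison)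
  from cont show "((\<lambda>u. \<bar>g u - g s\<bar>) \<longlongrightarrow> 0) (at s)"
    by (simp add: LIM_zero isCont_def tendsto_rabs_zero)
  show "\<forall>\<^sub>F u in at s. norm ((f u - f s) / (u - s) - g s) \<le> \<bar>g u - g s\<bar>"
  proof (rule eventually_at_filter[THEN iffD2, OF always_eventually], intro allI impI)
    fix u :: real
    assume "u \<noteq> s"
    have "f u - f s \<le> (u - s) * g s" "f s - f u \<le> (s - u) * g u"
      by (rule super)+
    then consider "g u \<le> (f u - f s) / (u - s)" "(f u - f s) / (u - s) \<le> g s"
      | "g s \<le> (f u - f s) / (u - s)" "(f u - f s) / (u - s) \<le> g u"
      using \<open>u \<noteq> s\<close> by (cases "s < u") (auto simp: field_simps)
    then show "norm ((f u - f s) / (u - s) - g s) \<le> \<bar>g u - g s\<bar>"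
      by cases auto
  qed
qed

section \<open>Densities of probability measures\<close>

lemma integrable_integral_prob_density:
  fixes f :: "'a \<Rightarrow> real"
  assumes [measurable]: "f \<in> borel_measurable M" and nonneg: "\<And>x. x \<in> space M \<Longrightarrow> 0 \<le> f x"
    and prob: "prob_space (density M (\<lambda>x. ennreal (f x)))"
  shows "integrable M f" "(\<integral>x. f x \<partial>M) = 1"
proof -
  interpret F: prob_space "density M (\<lambda>x. ennreal (f x))" by (rule prob)
  show "integrable M f"
    using integrable_density[of "\<lambda>_. 1::real" M f] nonneg by simp
  show "(\<integral>x. f x \<partial>M) = 1"
    using integral_density[of "\<lambda>_. 1::real" M f] nonneg F.prob_space by simp
qed


locale density_pair =
  fixes \<mu> P Q :: "'a measure" and p q :: "'a \<Rightarrow> real"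
  assumes dens_pair: "dens_pair \<mu> P Q p q"
begin

lemma p_measurable[measurable]: "p \<in> borel_measurable \<mu>"
  and q_measurable[measurable]: "q \<in> borel_measurable \<mu>"
  and p_nonneg: "x \<in> space \<mu> \<Longrightarrow> 0 \<le> p x"
  and q_nonneg: "x \<in> space \<mu> \<Longrightarrow> 0 \<le> q x"
  and P_density: "P = density \<mu> (\<lambda>x. ennreal (p x))"
  and Q_density: "Q = density \<mu> (\<lambda>x. ennreal (q x))"
  and prob_space_P: "prob_space P"
  and prob_space_Q: "prob_space Q"
  using dens_pair by (auto simp: dens_pair_def)

lemma space_P: "space P = space \<mu>" and sets_P: "sets P = sets \<mu>"
  by (simp_all add: P_density)

lemma measure_P_eq_integral:
  assumes "A \<in> sets \<mu>"
  shows "measure P A = (\<integral>x. indicator A x * p x \<partial>\<mu>)"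
proof -
  have "measure P A = (\<integral>x. indicator A x \<partial>P)"
    using sets.sets_into_space[OF assms] by (simp add: space_P Int_absorb2)
  also have "\<dots> = (\<integral>x. p x *\<^sub>R indicator A x \<partial>\<mu>)"
    unfolding P_density using assms p_nonneg by (intro integral_density) auto
  finally show ?thesis by (simp add: mult.commute)
qed

lemma integrable_p: "integrable \<mu> p" and integral_p: "(\<integral>x. p x \<partial>\<mu>) = 1"
  using integrable_integral_prob_density[OF p_measurable p_nonneg] prob_space_P P_density
  by auto

lemma integrable_q: "integrable \<mu> q" and integral_q: "(\<integral>x. q x \<partial>\<mu>) = 1"
  using integrable_integral_prob_density[OF q_measurable q_nonneg] prob_space_Q Q_density
  by auto

lemma integrable_min: "integrable \<mu> (\<lambda>x. min (w * p x) ((1 - w) * q x))"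
  by (rule Bochner_Integration.integrable_bound[where f="\<lambda>x. \<bar>w * p x\<bar> + \<bar>(1 - w) * q x\<bar>"])
    (use integrable_p integrable_q in auto)

lemma bayes_risk_slope_at_measurable[measurable]:
  "bayes_risk_slope_at p q w \<in> borel_measurable \<mu>"
  unfolding bayes_risk_slope_at_def by measurable

lemma bayes_risk_slope_at_bounds:
  "x \<in> space \<mu> \<Longrightarrow> - q x \<le> bayes_risk_slope_at p q w x"
  "x \<in> space \<mu> \<Longrightarrow> bayes_risk_slope_at p q w x \<le> p x"
  using p_nonneg[of x] q_nonneg[of x] by (auto simp: bayes_risk_slope_at_def)

lemma abs_bayes_risk_slope_at_le:
  "x \<in> space \<mu> \<Longrightarrow> \<bar>bayes_risk_slope_at p q w x\<bar> \<le> p x + q x"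
  using bayes_risk_slope_at_bounds[of x w] p_nonneg[of x] q_nonneg[of x] by auto

lemma integrable_bayes_risk_slope_at: "integrable \<mu> (bayes_risk_slope_at p q w)"
  by (rule Bochner_Integration.integrable_bound[where f="\<lambda>x. p x + q x"])
    (use integrable_p integrable_q in \<open>auto intro!: AE_I2 simp: abs_bayes_risk_slope_at_le p_nonneg q_nonneg\<close>)

lemma bayes_risk_slope_bounds: "- 1 \<le> bayes_risk_slope \<mu> p q w" "bayes_risk_slope \<mu> p q w \<le> 1"
proof -
  have "(\<integral>x. - q x \<partial>\<mu>) \<le> bayes_risk_slope \<mu> p q w"
    unfolding bayes_risk_slope_def
    by (intro integral_mono integrable_bayes_risk_slope_at bayes_risk_slope_at_bounds)
      (simp add: integrable_q)
  then show "- 1 \<le> bayes_risk_slope \<mu> p q w"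
    by (simp add: integral_q)
  have "bayes_risk_slope \<mu> p q w \<le> (\<integral>x. p x \<partial>\<mu>)"
    unfolding bayes_risk_slope_def
    by (intro integral_mono integrable_bayes_risk_slope_at bayes_risk_slope_at_bounds integrable_p)
  then show "bayes_risk_slope \<mu> p q w \<le> 1"
    by (simp add: integral_p)
qed

lemma degroot_info_eq_bayes_risk:
  assumes "0 < w" "w < 1"
  shows "degroot_info w \<mu> p q = min w (1 - w) - bayes_risk \<mu> p q w"
proof -
  have "degroot_info w \<mu> p q = (\<integral>x. q x * min w (1 - w) - min (w * p x) ((1 - w) * q x) \<partial>\<mu>)"
    unfolding degroot_info_def f_divergence_def
    by (intro Bochner_Integration.integral_cong refl fdiv_integrand_degroot_phi assms p_nonneg q_nonneg)
  also have "\<dots> = min w (1 - w) - bayes_risk \<mu> p q w"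
    unfolding bayes_risk_def using integrable_q integrable_min by (simp add: integral_q)
  finally show ?thesis .
qed

lemma bayes_risk_supergradient:
  "bayes_risk \<mu> p q u - bayes_risk \<mu> p q s \<le> (u - s) * bayes_risk_slope \<mu> p q s"
proof -
  have "bayes_risk \<mu> p q u
      \<le> (\<integral>x. min (s * p x) ((1 - s) * q x) + (u - s) * bayes_risk_slope_at p q s x \<partial>\<mu>)"
    unfolding bayes_risk_def
    by (intro integral_mono integrable_min Bochner_Integration.integrable_add
        integrable_mult_right integrable_bayes_risk_slope_at min_le_tangent_bayes_risk_slope_at)
  also have "\<dots> = bayes_risk \<mu> p q s + (u - s) * bayes_risk_slope \<mu> p q s"
    unfolding bayes_risk_def bayes_risk_slope_def
    using integrable_min integrable_bayes_risk_slope_at by simp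
  finally show ?thesis by simp
qed

lemma bayes_risk_add_slope:
  "bayes_risk \<mu> p q w + (1 - w) * bayes_risk_slope \<mu> p q w
     = measure P {x \<in> space \<mu>. w * p x < (1 - w) * q x}"
proof -
  have "bayes_risk \<mu> p q w + (1 - w) * bayes_risk_slope \<mu> p q w
      = (\<integral>x. min (w * p x) ((1 - w) * q x) + (1 - w) * bayes_risk_slope_at p q w x \<partial>\<mu>)"
    unfolding bayes_risk_def bayes_risk_slope_def
    using integrable_min integrable_bayes_risk_slope_at by simp
  also have "\<dots> = (\<integral>x. indicator {x \<in> space \<mu>. w * p x < (1 - w) * q x} x * p x \<partial>\<mu>)"
    unfolding min_add_bayes_risk_slope_at
    by (intro Bochner_Integration.integral_cong) (auto simp: indicator_def)
  also have "\<dots> = measure P {x \<in> space \<mu>. w * p x < (1 - w) * q x}"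
    by (rule measure_P_eq_integral[symmetric]) measurable
  finally show ?thesis .
qed

end

section \<open>Atomless information density\<close>

locale atomless_density_pair = density_pair +
  fixes b :: real
  assumes base: "1 < b"
    and no_atoms: "info_no_atoms b P p q"
begin

abbreviation info_curve :: "real \<Rightarrow> real" where
  "info_curve \<equiv> \<lambda>w. degroot_info w \<mu> p q"

lemma info_dens_measurable[measurable]: "info_dens b p q \<in> borel_measurable \<mu>"
  unfolding info_dens_def log_ext_def by measurable

lemma info_dens_eq_log_ratio:
  assumes "0 < p x" "0 < q x"
  shows "info_dens b p q x = ereal (log b (p x / q x))"
  using assms base by (simp add: info_dens_def log_ext_def log_divide)

lemma info_dens_less_log_odds_iff:
  assumes "0 < w" "w < 1" "x \<in> space \<mu>" "0 < p x"
  shows "info_dens b p q x < ereal (log b ((1 - w) / w)) \<longleftrightarrow> w * p x < (1 - w) * q x"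
proof (cases "q x > 0")
  case True
  have "log b (p x / q x) < log b ((1 - w) / w) \<longleftrightarrow> p x / q x < (1 - w) / w"
    using True assms base by (intro log_less_cancel_iff) auto
  also have "\<dots> \<longleftrightarrow> w * p x < (1 - w) * q x"
    using True assms by (simp add: field_simps)
  finally show ?thesis
    using info_dens_eq_log_ratio[OF assms(4) True] by simp
next
  case False
  then have "q x = 0" using q_nonneg[OF assms(3)] by simp
  moreover have "0 < w * p x" using assms by simp
  ultimately show ?thesis by (simp add: info_dens_def log_ext_def)
qed

lemma AE_P_info_dens_neq: "AE x in P. info_dens b p q x \<noteq> ereal t"
proof -
  interpret P: prob_space P by (rule prob_space_P)
  have "measure P {x \<in> space P. info_dens b p q x = ereal t} = 0"
    using no_atoms by (simp add: info_no_atoms_def)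
  then have "{x \<in> space P. info_dens b p q x = ereal t} \<in> null_sets P"
    by (subst P.emeasure_eq_measure[THEN trans, THEN null_setsI]) (auto simp: sets_P space_P)
  then show ?thesis
    by (rule AE_I') auto
qed

lemma AE_P_p_pos: "AE x in P. 0 < p x"
  unfolding P_density by (subst AE_density) auto

lemma AE_no_tie:
  assumes "0 < s" "s < 1"
  shows "AE x in \<mu>. s * p x = (1 - s) * q x \<longrightarrow> p x = 0"
proof -
  have "AE x in P. info_dens b p q x \<noteq> ereal (log b ((1 - s) / s))"
    by (rule AE_P_info_dens_neq)
  then have "AE x in \<mu>. 0 < p x \<longrightarrow> info_dens b p q x \<noteq> ereal (log b ((1 - s) / s))"
    unfolding P_density by (subst (asm) AE_density) auto
  then show ?thesis
  proof (rule AE_mp, intro AE_I2 impI)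
    fix x assume x: "x \<in> space \<mu>" "s * p x = (1 - s) * q x"
      and neq: "0 < p x \<longrightarrow> info_dens b p q x \<noteq> ereal (log b ((1 - s) / s))"
    show "p x = 0"
    proof (rule ccontr)
      assume "p x \<noteq> 0"
      with p_nonneg[OF x(1)] have "0 < p x" by simp
      with x assms have "0 < (1 - s) * q x" by (metis mult_pos_pos)
      with assms have "0 < q x" by (simp add: zero_less_mult_iff)
      with x assms have "p x / q x = (1 - s) / s" by (simp add: field_simps)
      with neq \<open>0 < p x\<close> \<open>0 < q x\<close> show False
        using info_dens_eq_log_ratio by simp
    qed
  qed
qed

lemma isCont_bayes_risk_slope:
  assumes "0 < s" "s < 1"
  shows "isCont (bayes_risk_slope \<mu> p q) s"
  unfolding continuous_at_sequentially comp_def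
proof (intro allI impI)
  fix X :: "nat \<Rightarrow> real"
  assume X: "X \<longlonglongrightarrow> s"
  show "(\<lambda>n. bayes_risk_slope \<mu> p q (X n)) \<longlonglongrightarrow> bayes_risk_slope \<mu> p q s"
    unfolding bayes_risk_slope_def
  proof (rule integral_dominated_convergence[where w="\<lambda>x. p x + q x"])
    show "integrable \<mu> (\<lambda>x. p x + q x)"
      using integrable_p integrable_q by auto
    show "AE x in \<mu>. norm (bayes_risk_slope_at p q (X n) x) \<le> p x + q x" for n
      by (intro AE_I2) (simp add: abs_bayes_risk_slope_at_le)
    show "AE x in \<mu>. (\<lambda>n. bayes_risk_slope_at p q (X n) x) \<longlonglongrightarrow> bayes_risk_slope_at p q s x"
      using AE_no_tie[OF assms]
    proof (rule AE_mp, intro AE_I2 impI)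
      fix x assume "x \<in> space \<mu>" and "s * p x = (1 - s) * q x \<longrightarrow> p x = 0"
      then have "s * p x \<noteq> (1 - s) * q x \<or> (p x = 0 \<and> q x = 0)"
        using assms by auto
      then show "(\<lambda>n. bayes_risk_slope_at p q (X n) x) \<longlonglongrightarrow> bayes_risk_slope_at p q s x"
        by (intro isCont_tendsto_compose[OF isCont_bayes_risk_slope_at] X)
    qed
  qed auto
qed

lemma has_field_derivative_bayes_risk:
  assumes "0 < s" "s < 1"
  shows "(bayes_risk \<mu> p q has_field_derivative bayes_risk_slope \<mu> p q s) (at s)"
  by (intro has_field_derivative_supergradient bayes_risk_supergradient
      isCont_bayes_risk_slope assms)

lemma has_field_derivative_info_curve:
  assumes "0 < w" "w < 1" "w \<noteq> 1/2"
  shows "(info_curve has_field_derivative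
            (if w < 1/2 then 1 else - 1) - bayes_risk_slope \<mu> p q w) (at w)"
proof (cases "w < 1/2")
  case True
  show ?thesis
  proof (rule has_field_derivative_transform_within_open[where S="{0<..<1/2}"])
    show "((\<lambda>v. v - bayes_risk \<mu> p q v) has_field_derivative
            (if w < 1/2 then 1 else - 1) - bayes_risk_slope \<mu> p q w) (at w)"
      using True assms by (auto intro!: derivative_eq_intros has_field_derivative_bayes_risk)
  qed (use True assms in \<open>auto simp: degroot_info_eq_bayes_risk\<close>)
next
  case False
  show ?thesis
  proof (rule has_field_derivative_transform_within_open[where S="{1/2<..<1}"])
    show "((\<lambda>v. (1 - v) - bayes_risk \<mu> p q v) has_field_derivative
            (if w < 1/2 then 1 else - 1) - bayes_risk_slope \<mu> p q w) (at w)"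
      using False assms by (auto intro!: derivative_eq_intros has_field_derivative_bayes_risk)
  qed (use False assms in \<open>auto simp: degroot_info_eq_bayes_risk\<close>)
qed

lemma deriv_info_curve:
  "0 < w \<Longrightarrow> w < 1 \<Longrightarrow> w \<noteq> 1/2 \<Longrightarrow>
     deriv info_curve w = (if w < 1/2 then 1 else - 1) - bayes_risk_slope \<mu> p q w"
  by (rule DERIV_imp_deriv[OF has_field_derivative_info_curve])

lemma continuous_on_deriv_info_curve:
  "continuous_on ({0<..<1/2} \<union> {1/2<..<1}) (deriv info_curve)"
proof (rule continuous_on_open_Un)
  have "continuous_on {0<..<1/2} (\<lambda>w. 1 - bayes_risk_slope \<mu> p q w)"
    by (intro continuous_at_imp_continuous_on ballI continuous_intros isCont_bayes_risk_slope) auto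
  then show "continuous_on {0<..<1/2} (deriv info_curve)"
    by (rule continuous_on_cong[THEN iffD1, rotated 2]) (auto simp: deriv_info_curve)
  have "continuous_on {1/2<..<1} (\<lambda>w. - 1 - bayes_risk_slope \<mu> p q w)"
    by (intro continuous_at_imp_continuous_on ballI continuous_intros isCont_bayes_risk_slope) auto
  then show "continuous_on {1/2<..<1} (deriv info_curve)"
    by (rule continuous_on_cong[THEN iffD1, rotated 2]) (auto simp: deriv_info_curve)
qed auto

lemma tendsto_bayes_risk_slope_half:
  "(bayes_risk_slope \<mu> p q \<longlongrightarrow> bayes_risk_slope \<mu> p q (1/2)) (at (1/2))"
  using isCont_bayes_risk_slope[of "1/2"] by (simp add: isCont_def)

lemma tendsto_deriv_info_curve_left:
  "(deriv info_curve \<longlongrightarrow> 1 - bayes_risk_slope \<mu> p q (1/2)) (at_left (1/2))"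
proof (rule Lim_transform_eventually)
  show "((\<lambda>w. 1 - bayes_risk_slope \<mu> p q w) \<longlongrightarrow> 1 - bayes_risk_slope \<mu> p q (1/2)) (at_left (1/2))"
    using tendsto_bayes_risk_slope_half filterlim_at_split by (intro tendsto_intros) blast
  have "eventually (\<lambda>w. w \<in> {0<..<1/2}) (at_left (1/2::real))"
    by (rule eventually_at_left_real) simp
  then show "eventually (\<lambda>w. 1 - bayes_risk_slope \<mu> p q w = deriv info_curve w) (at_left (1/2))"
    by eventually_elim (simp add: deriv_info_curve)
qed

lemma tendsto_deriv_info_curve_right:
  "(deriv info_curve \<longlongrightarrow> - 1 - bayes_risk_slope \<mu> p q (1/2)) (at_right (1/2))"
proof (rule Lim_transform_eventually)
  show "((\<lambda>w. - 1 - bayes_risk_slope \<mu> p q w) \<longlongrightarrow> - 1 - bayes_risk_slope \<mu> p q (1/2)) (at_right (1/2))"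
    using tendsto_bayes_risk_slope_half filterlim_at_split by (intro tendsto_intros) blast
  have "eventually (\<lambda>w. w \<in> {1/2<..<1}) (at_right (1/2::real))"
    by (rule eventually_at_right_real) simp
  then show "eventually (\<lambda>w. - 1 - bayes_risk_slope \<mu> p q w = deriv info_curve w) (at_right (1/2))"
    by eventually_elim (simp add: deriv_info_curve)
qed

lemma info_cdf_log_odds_eq_measure:
  assumes "0 < w" "w < 1"
  shows "info_cdf b P p q (log b ((1 - w) / w)) = measure P {x \<in> space \<mu>. w * p x < (1 - w) * q x}"
  unfolding info_cdf_def
proof (rule measure_eq_AE)
  show "AE x in P. x \<in> {y \<in> space P. info_dens b p q y \<le> ereal (log b ((1 - w) / w))}
                 \<longleftrightarrow> x \<in> {x \<in> space \<mu>. w * p x < (1 - w) * q x}"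
    using AE_P_info_dens_neq[of "log b ((1 - w) / w)"] AE_P_p_pos
  proof eventually_elim
    case (elim x)
    then show ?case
      using info_dens_less_log_odds_iff[OF assms] by (auto simp: space_P order_le_less)
  qed
qed (auto simp: sets_P space_P)

lemma info_cdf_log_odds:
  assumes "0 < w" "w < 1"
  shows "info_cdf b P p q (log b ((1 - w) / w))
           = bayes_risk \<mu> p q w + (1 - w) * bayes_risk_slope \<mu> p q w"
  by (simp add: info_cdf_log_odds_eq_measure[OF assms] bayes_risk_add_slope)

lemma info_cdf_log_odds_info_curve:
  assumes "0 < w" "w < 1" "w \<noteq> 1/2"
  shows "info_cdf b P p q (log b ((1 - w) / w))
           = (if w < 1/2 then 1 else 0) - info_curve w - (1 - w) * deriv info_curve w"
  using assms
  by (simp add: info_cdf_log_odds deriv_info_curve degroot_info_eq_bayes_risk algebra_simps)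

lemma info_cdf_zero_left:
  assumes "(deriv info_curve \<longlongrightarrow> L) (at_left (1/2))"
  shows "info_cdf b P p q 0 = 1 - info_curve (1/2) - L / 2"
proof -
  have "L = 1 - bayes_risk_slope \<mu> p q (1/2)"
    using tendsto_unique[OF _ assms tendsto_deriv_info_curve_left] by simp
  with info_cdf_log_odds[of "1/2"] show ?thesis
    by (simp add: degroot_info_eq_bayes_risk field_simps)
qed

lemma info_cdf_zero_right:
  assumes "(deriv info_curve \<longlongrightarrow> L) (at_right (1/2))"
  shows "info_cdf b P p q 0 = - info_curve (1/2) - L / 2"
proof -
  have "L = - 1 - bayes_risk_slope \<mu> p q (1/2)"
    using tendsto_unique[OF _ assms tendsto_deriv_info_curve_right] by simp
  with info_cdf_log_odds[of "1/2"] show ?thesis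
    by (simp add: degroot_info_eq_bayes_risk field_simps)
qed

end

section \<open>Recovering the distribution function from the information curve\<close>

lemma log_odds_surj:
  fixes b x :: real
  assumes "1 < b"
  obtains w where "0 < w" "w < 1" "log b ((1 - w) / w) = x"
    and "0 < x \<longleftrightarrow> w < 1/2" and "x < 0 \<longleftrightarrow> 1/2 < w"
proof
  define y where "y = b powr x"
  define w where "w = 1 / (1 + y)"
  have "0 < y" using assms by (simp add: y_def)
  then show "0 < w" "w < 1" by (auto simp: w_def field_simps)
  have "(1 - w) / w = y"
    using \<open>0 < y\<close> by (simp add: w_def field_simps)
  then show "log b ((1 - w) / w) = x"
    using assms by (simp add: y_def)
  have "0 < x \<longleftrightarrow> 1 < y" "x < 0 \<longleftrightarrow> y < 1"
    using powr_less_cancel_iff[OF assms, of 0 x] powr_less_cancel_iff[OF assms, of x 0] assms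
    by (simp_all add: y_def)
  then show "0 < x \<longleftrightarrow> w < 1/2" "x < 0 \<longleftrightarrow> 1/2 < w"
    using \<open>0 < y\<close> by (auto simp: w_def field_simps)
qed

lemma info_cdf_log_odds_determined:
  assumes A: "atomless_density_pair \<mu> P Q p q b" and B: "atomless_density_pair \<mu>' P' Q' p' q' b"
    and S: "open S" "\<And>v. v \<in> S \<Longrightarrow> degroot_info v \<mu>' p' q' = degroot_info v \<mu> p q"
    and w: "w \<in> S" "0 < w" "w < 1" "w \<noteq> 1/2"
  shows "info_cdf b P' p' q' (log b ((1 - w) / w)) = info_cdf b P p q (log b ((1 - w) / w))"
proof -
  have "deriv (\<lambda>v. degroot_info v \<mu>' p' q') w = deriv (\<lambda>v. degroot_info v \<mu> p q) w"
    using S w by (intro deriv_cong_ev refl eventually_nhds_in_open[THEN eventually_mono]) auto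
  then show ?thesis
    using atomless_density_pair.info_cdf_log_odds_info_curve[OF A w(2-4)]
      atomless_density_pair.info_cdf_log_odds_info_curve[OF B w(2-4)] S(2)[OF w(1)]
    by simp
qed

lemma info_cdf_determined_nonneg:
  assumes A: "atomless_density_pair \<mu> P Q p q b" and B: "atomless_density_pair \<mu>' P' Q' p' q' b"
    and eq: "\<forall>w \<in> {0<..1/2}. degroot_info w \<mu>' p' q' = degroot_info w \<mu> p q"
    and "0 \<le> x"
  shows "info_cdf b P' p' q' x = info_cdf b P p q x"
proof (cases "x = 0")
  case True
  interpret A: atomless_density_pair \<mu> P Q p q b by (rule A)
  interpret B: atomless_density_pair \<mu>' P' Q' p' q' b by (rule B)
  have "eventually (\<lambda>w. w \<in> {0<..<1/2}) (at_left (1/2::real))"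
    by (rule eventually_at_left_real) simp
  then have "eventually (\<lambda>w. deriv A.info_curve w = deriv B.info_curve w) (at_left (1/2))"
    by eventually_elim
      (use eq in \<open>auto intro!: deriv_cong_ev eventually_nhds_in_open[of "{0<..<1/2}", THEN eventually_mono]\<close>)
  with A.tendsto_deriv_info_curve_left
  have "(deriv B.info_curve \<longlongrightarrow> 1 - bayes_risk_slope \<mu> p q (1/2)) (at_left (1/2))"
    by (rule Lim_transform_eventually)
  then show ?thesis
    using True eq A.info_cdf_zero_left[OF A.tendsto_deriv_info_curve_left] B.info_cdf_zero_left
    by simp
next
  case False
  obtain w where w: "0 < w" "w < 1/2" "log b ((1 - w) / w) = x"
    using log_odds_surj[OF atomless_density_pair.base[OF A], of x] False \<open>0 \<le> x\<close> by auto
  then show ?thesis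
    using info_cdf_log_odds_determined[OF A B, of "{0<..<1/2}" w] eq by auto
qed

lemma info_cdf_determined_neg:
  assumes A: "atomless_density_pair \<mu> P Q p q b" and B: "atomless_density_pair \<mu>' P' Q' p' q' b"
    and eq: "\<forall>w \<in> {1/2<..<1}. degroot_info w \<mu>' p' q' = degroot_info w \<mu> p q"
    and "x < 0"
  shows "info_cdf b P' p' q' x = info_cdf b P p q x"
proof -
  obtain w where w: "1/2 < w" "w < 1" "log b ((1 - w) / w) = x"
    using log_odds_surj[OF atomless_density_pair.base[OF A], of x] \<open>x < 0\<close> by auto
  then show ?thesis
    using info_cdf_log_odds_determined[OF A B, of "{1/2<..<1}" w] eq by auto
qed

theorem theorem4:
  fixes b :: real and \<mu> P Q :: "'a measure" and p q :: "'a \<Rightarrow> real"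
  assumes "b > 1"
    and "dens_pair \<mu> P Q p q"
    and "info_no_atoms b P p q"
  shows
   "(\<forall>\<omega> \<in> {0<..<1/2} \<union> {1/2<..<1}. (\<lambda>w. degroot_info w \<mu> p q) differentiable (at \<omega>))
    \<and> continuous_on ({0<..<1/2} \<union> {1/2<..<1}) (deriv (\<lambda>w. degroot_info w \<mu> p q))
    \<and> (\<forall>\<omega> \<in> {0<..<1/2}. deriv (\<lambda>w. degroot_info w \<mu> p q) \<omega> \<ge> 0)
    \<and> (\<forall>\<omega> \<in> {1/2<..<1}. deriv (\<lambda>w. degroot_info w \<mu> p q) \<omega> \<le> 0)
    \<and> (\<exists>L1 L2. (deriv (\<lambda>w. degroot_info w \<mu> p q) \<longlongrightarrow> L1) (at_left (1/2))
             \<and> (deriv (\<lambda>w. degroot_info w \<mu> p q) \<longlongrightarrow> L2) (at_right (1/2))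
             \<and> L1 - L2 = 2)
    \<and> (\<forall>\<omega> \<in> {0<..<1/2}. info_cdf b P p q (log b ((1 - \<omega>) / \<omega>))
          = 1 - degroot_info \<omega> \<mu> p q - (1 - \<omega>) * deriv (\<lambda>w. degroot_info w \<mu> p q) \<omega>)
    \<and> (\<forall>\<omega> \<in> {1/2<..<1}. info_cdf b P p q (log b ((1 - \<omega>) / \<omega>))
          = - degroot_info \<omega> \<mu> p q - (1 - \<omega>) * deriv (\<lambda>w. degroot_info w \<mu> p q) \<omega>)
    \<and> info_cdf b P p q 0 = - degroot_info (1/2) \<mu> p q
          - 1/2 * Lim (at_right (1/2)) (deriv (\<lambda>w. degroot_info w \<mu> p q))
    \<and> (\<forall>(\<mu>' :: 'b measure) P' Q' p' q'.
          dens_pair \<mu>' P' Q' p' q' \<and> info_no_atoms b P' p' q'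
          \<and> (\<forall>\<omega> \<in> {0<..1/2}. degroot_info \<omega> \<mu>' p' q' = degroot_info \<omega> \<mu> p q)
          \<longrightarrow> (\<forall>x \<ge> 0. info_cdf b P' p' q' x = info_cdf b P p q x))
    \<and> (\<forall>(\<mu>' :: 'b measure) P' Q' p' q'.
          dens_pair \<mu>' P' Q' p' q' \<and> info_no_atoms b P' p' q'
          \<and> (\<forall>\<omega> \<in> {1/2<..<1}. degroot_info \<omega> \<mu>' p' q' = degroot_info \<omega> \<mu> p q)
          \<longrightarrow> (\<forall>x < 0. info_cdf b P' p' q' x = info_cdf b P p q x))"
proof -
  have A: "atomless_density_pair \<mu> P Q p q b"
    using assms by unfold_locales
  interpret atomless_density_pair \<mu> P Q p q b by (rule A)
  have differentiable: "info_curve differentiable (at w)" if "w \<in> {0<..<1/2} \<union> {1/2<..<1}" for w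
    using has_field_derivative_info_curve[of w] that
    by (auto simp: real_differentiable_def)
  have right_limit: "Lim (at_right (1/2)) (deriv info_curve) = - 1 - bayes_risk_slope \<mu> p q (1/2)"
    by (intro tendsto_Lim tendsto_deriv_info_curve_right) simp
  have determined: "atomless_density_pair \<mu>' P' Q' p' q' b"
    if "dens_pair \<mu>' P' Q' p' q'" "info_no_atoms b P' p' q'" for \<mu>' :: "'b measure" and P' Q' p' q'
    using that assms by unfold_locales
  show ?thesis
    using differentiable continuous_on_deriv_info_curve deriv_info_curve bayes_risk_slope_bounds
      tendsto_deriv_info_curve_left tendsto_deriv_info_curve_right info_cdf_log_odds_info_curve
      info_cdf_zero_right[OF tendsto_deriv_info_curve_right] right_limit
      info_cdf_determined_nonneg[OF A determined] info_cdf_determined_neg[OF A determined]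
    by (auto 0 3)
qed

end
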